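(* There do not exist symmetric homogeneous stable means $K,M$, each possessing a symmetric asymptotic expansion, such that the first Seiffert mean $P$ is $(K,M)$-stabilizable, i.e. such that $P(s,t)=K\big(P(s,M(s,t)),P(M(s,t),t)\big)$ for all $s,t>0$. The same holds with $P$ replaced by the second Seiffert mean $T$ or by the Neuman–Sándor mean $NS$.
   Context: For $s,t>0$, $s\ne t$: $P(s,t)=\frac{t-s}{2\arcsin\frac{t-s}{t+s}}$, $T(s,t)=\frac{t-s}{2\arctan\frac{t-s}{t+s}}$, $NS(s,t)=\frac{t-s}{2\operatorname{arcsinh}\frac{t-s}{t+s}}$, each equal to $s$ when $s=t$. A bi-variate mean is $M:(0,\infty)^2\to(0,\infty)$ with $\min\le M\le\max$; symmetric, homogeneous (degree 1). $M$ is stable if $M(s,t)=M\big(M(s,M(s,t)),M(M(s,t),t)\big)$. For stable $K,M$, $N$ is $(K,M)$-stabilizable if $N(s,t)=K\big(N(s,M(s,t)),N(M(s,t),t)\big)$ for all $s,t>0$. A mean has a symmetric asymptotic expansion with coefficients $(a_n)$ if for every fixed real $t$ and $N\ge0$, $M(x-t,x+t)=\sum_{n=0}^Na_nt^{2n}x^{-2n+1}+o(x^{-2N+1})$ as $x\to\infty$. *)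

theory Defs
  imports "HOL-Analysis.Analysis" "HOL-Library.Landau_Symbols"
begin

definition seiffert_P :: "real \<Rightarrow> real \<Rightarrow> real" where
  "seiffert_P s t = (if s = t then s else (t - s) / (2 * arcsin ((t - s) / (t + s))))"

definition seiffert_T :: "real \<Rightarrow> real \<Rightarrow> real" where
  "seiffert_T s t = (if s = t then s else (t - s) / (2 * arctan ((t - s) / (t + s))))"

definition neuman_sandor :: "real \<Rightarrow> real \<Rightarrow> real" where
  "neuman_sandor s t = (if s = t then s else (t - s) / (2 * arsinh ((t - s) / (t + s))))"

definition is_mean :: "(real \<Rightarrow> real \<Rightarrow> real) \<Rightarrow> bool" where
  "is_mean M \<longleftrightarrow> (\<forall>s>0. \<forall>t>0. min s t \<le> M s t \<and> M s t \<le> max s t)"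

definition symmetric_mean :: "(real \<Rightarrow> real \<Rightarrow> real) \<Rightarrow> bool" where
  "symmetric_mean M \<longleftrightarrow> (\<forall>s>0. \<forall>t>0. M s t = M t s)"

definition homogeneous_mean :: "(real \<Rightarrow> real \<Rightarrow> real) \<Rightarrow> bool" where
  "homogeneous_mean M \<longleftrightarrow> (\<forall>l>0. \<forall>s>0. \<forall>t>0. M (l * s) (l * t) = l * M s t)"

definition stable_mean :: "(real \<Rightarrow> real \<Rightarrow> real) \<Rightarrow> bool" where
  "stable_mean M \<longleftrightarrow> (\<forall>s>0. \<forall>t>0. M s t = M (M s (M s t)) (M (M s t) t))"

definition stabilizable ::
  "(real \<Rightarrow> real \<Rightarrow> real) \<Rightarrow> (real \<Rightarrow> real \<Rightarrow> real) \<Rightarrow> (real \<Rightarrow> real \<Rightarrow> real) \<Rightarrow> bool" where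
  "stabilizable N K M \<longleftrightarrow> (\<forall>s>0. \<forall>t>0. N s t = K (N s (M s t)) (N (M s t) t))"

definition has_sym_asymp_expansion :: "(real \<Rightarrow> real \<Rightarrow> real) \<Rightarrow> (nat \<Rightarrow> real) \<Rightarrow> bool" where
  "has_sym_asymp_expansion M a \<longleftrightarrow>
     (\<forall>t::real. \<forall>N::nat.
        (\<lambda>x. M (x - t) (x + t) - (\<Sum>n\<le>N. a n * t ^ (2 * n) * x powr (1 - 2 * real n)))
          \<in> o[at_top](\<lambda>x. x powr (1 - 2 * real N)))"

definition good_mean :: "(real \<Rightarrow> real \<Rightarrow> real) \<Rightarrow> bool" where
  "good_mean M \<longleftrightarrow> is_mean M \<and> symmetric_mean M \<and> homogeneous_mean M \<and> stable_mean M
     \<and> (\<exists>a. has_sym_asymp_expansion M a)"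

end

theory Submission
  imports Defs "HOL-Real_Asymp.Real_Asymp"
begin

text \<open>A symmetric homogeneous mean \<open>M\<close> is determined by its even profile \<open>m e = M (1 - e) (1 + e)\<close>,
and by homogeneity an asymptotic expansion of \<open>M (x - t) (x + t)\<close> as \<open>x \<rightarrow> \<infinity>\<close> is the same thing as
a Taylor expansion \<open>m e = 1 + a\<^sub>1 e\<^sup>2 + a\<^sub>2 e\<^sup>4 + a\<^sub>3 e\<^sup>6 + o(e\<^sup>6)\<close> at \<open>0\<close>.
For \<open>s = 1 - e\<close>, \<open>t = 1 + e\<close> the symmetry of \<open>N\<close> and \<open>M\<close> turns
\<open>N s t = K (N s (M s t)) (N (M s t) t)\<close> into \<open>n e = K (y e) (y (-e))\<close> with \<open>y e = N (1 - e) (m e)\<close>,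
and composing sixth order jets yields three polynomial equations between the Taylor coefficients of the
profiles of \<open>N\<close>, \<open>K\<close> and \<open>M\<close>. Stability of \<open>K\<close> and \<open>M\<close> is the case \<open>N = K = M\<close> and gives two further
equations for each of them. The profiles of \<open>P\<close>, \<open>T\<close> and \<open>NS\<close> are \<open>e / arcsin e\<close>, \<open>e / arctan e\<close> and
\<open>e / arsinh e\<close>; with their Taylor coefficients the seven equations have no common solution.\<close>

section \<open>Jets of order six at the origin\<close>

lemma bigo_1_if_tendsto: "(f \<longlongrightarrow> c) F \<Longrightarrow> f \<in> O[F](\<lambda>_. 1)"
  for f :: "'a \<Rightarrow> real"
  by (rule bigoI_tendsto[where c = c]) simp_all

lemma smallo_imp_tendsto_zero:
  fixes f g :: "'a \<Rightarrow> real"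
  assumes "f \<in> o[F](g)" "(g \<longlongrightarrow> 0) F"
  shows "(f \<longlongrightarrow> 0) F"
proof -
  from assms(1) bigo_1_if_tendsto[OF assms(2)] have "f \<in> o[F](\<lambda>_. 1)"
    by (rule landau_o.small_big_trans)
  then show ?thesis
    using smalloD_tendsto by fastforce
qed

lemma smallo_nhds_0_power_Suc_mult:
  fixes g :: "real \<Rightarrow> real"
  assumes "g \<in> O[nhds 0](\<lambda>_. 1)"
  shows "(\<lambda>e. e ^ Suc n * g e) \<in> o[nhds 0](\<lambda>e. e ^ n)"
proof -
  have "((\<lambda>e::real. e / 1) \<longlongrightarrow> 0) (nhds 0)"
    by (simp add: filterlim_ident)
  then have "(\<lambda>e::real. e) \<in> o[nhds 0](\<lambda>_. 1)"
    by (rule smalloI_tendsto) simp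
  from landau_o.small_big_mult[OF this assms]
  have "(\<lambda>e. e ^ n * (e * g e)) \<in> o[nhds 0](\<lambda>e. e ^ n * (1 * 1))"
    by (rule landau_o.small.mult_left)
  then show ?thesis by (simp add: mult_ac)
qed

lemma smallo_nhds_if_smallo_at:
  assumes "f \<in> o[at x](g)" "f x = 0" shows "f \<in> o[nhds x](g)"
proof (rule landau_o.smallI)
  fix c :: real assume "c > 0"
  with assms show "eventually (\<lambda>y. norm (f y) \<le> c * norm (g y)) (nhds x)"
    unfolding eventually_nhds_conv_at by (auto dest: landau_o.smallD)
qed

lemma isCont_horner_sum: "isCont (\<lambda>e. horner_sum id e cs) (x::real)"
  by (induction cs) (auto intro!: continuous_intros)

lemma tendsto_nhds_horner_sum: "((\<lambda>e. horner_sum id e cs) \<longlongrightarrow> horner_sum id x cs) (nhds (x::real))"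
  using isCont_horner_sum[where x = x and cs = cs] tendsto_at_iff_tendsto_nhds[of "\<lambda>e. horner_sum id e cs" x]
  by (simp add: isCont_def)

lemma horner_sum_add:
  "length c = length d \<Longrightarrow> horner_sum id e (map2 (+) c d) = horner_sum id e c + horner_sum id e d"
  by (induction c d rule: list_induct2) (simp_all add: algebra_simps)

lemma horner_sum_cmult: "horner_sum id e (map ((*) k) c) = k * horner_sum id e c"
  by (induction c) (simp_all add: algebra_simps)

text \<open>Coefficient lists are evaluated by Horner's scheme. Using the filter \<open>nhds 0\<close> instead of
  \<open>at 0\<close> also pins down \<open>f 0\<close>, which is what makes jets compose.\<close>
definition has_jet6 :: "(real \<Rightarrow> real) \<Rightarrow> real list \<Rightarrow> bool" where
  "has_jet6 f c \<longleftrightarrow> (\<lambda>e. f e - horner_sum id e c) \<in> o[nhds 0](\<lambda>e. e ^ 6)"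

lemma has_jet6_horner_sum: "has_jet6 (\<lambda>e. horner_sum id e c) c"
  by (simp add: has_jet6_def)

lemma has_jet6_cong:
  "has_jet6 f c \<Longrightarrow> eventually (\<lambda>e. g e = f e) (nhds 0) \<Longrightarrow> has_jet6 g c"
  unfolding has_jet6_def by (erule landau_o.small.in_cong[THEN iffD1, rotated]) (auto elim: eventually_mono)

lemma has_jet6_eq: "has_jet6 f c \<Longrightarrow> (\<And>e. f e = g e) \<Longrightarrow> c = d \<Longrightarrow> has_jet6 g d"
  by (auto intro: has_jet6_cong)

lemma has_jet6_tendsto:
  assumes "has_jet6 f (c0 # cs)" shows "(f \<longlongrightarrow> c0) (nhds 0)"
proof -
  have "((\<lambda>e::real. e ^ 6) \<longlongrightarrow> 0) (nhds 0)"
    by (auto intro!: tendsto_eq_intros filterlim_ident)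
  with assms have "((\<lambda>e. f e - horner_sum id e (c0 # cs)) \<longlongrightarrow> 0) (nhds 0)"
    unfolding has_jet6_def by (rule smallo_imp_tendsto_zero)
  then have "((\<lambda>e. (f e - horner_sum id e (c0 # cs)) + horner_sum id e (c0 # cs))
      \<longlongrightarrow> 0 + horner_sum id 0 (c0 # cs)) (nhds 0)"
    by (intro tendsto_add tendsto_nhds_horner_sum)
  then show ?thesis by simp
qed

lemma has_jet6_bigo_1:
  assumes "has_jet6 f (c0 # cs)" shows "f \<in> O[nhds 0](\<lambda>_. 1)"
  by (rule bigo_1_if_tendsto[OF has_jet6_tendsto[OF assms]])

lemma has_jet6_add:
  assumes "has_jet6 f c" "has_jet6 g d" "length c = length d"
  shows "has_jet6 (\<lambda>e. f e + g e) (map2 (+) c d)"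
  using sum_in_smallo(1)[OF assms(1,2)[unfolded has_jet6_def]] unfolding has_jet6_def
  by (simp add: horner_sum_add[OF assms(3)] algebra_simps)

lemma has_jet6_cmult: "has_jet6 f c \<Longrightarrow> has_jet6 (\<lambda>e. k * f e) (map ((*) k) c)"
  unfolding has_jet6_def horner_sum_cmult right_diff_distrib[symmetric]
  by (cases "k = 0") simp_all

lemma has_jet6_mult:
  assumes f: "has_jet6 f [c0,c1,c2,c3,c4,c5,c6]" and g: "has_jet6 g [d0,d1,d2,d3,d4,d5,d6]"
    and "h0 = c0*d0"
    "h1 = c0*d1 + c1*d0"
    "h2 = c0*d2 + c1*d1 + c2*d0"
    "h3 = c0*d3 + c1*d2 + c2*d1 + c3*d0"
    "h4 = c0*d4 + c1*d3 + c2*d2 + c3*d1 + c4*d0"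
    "h5 = c0*d5 + c1*d4 + c2*d3 + c3*d2 + c4*d1 + c5*d0"
    "h6 = c0*d6 + c1*d5 + c2*d4 + c3*d3 + c4*d2 + c5*d1 + c6*d0"
  shows "has_jet6 (\<lambda>e. f e * g e) [h0,h1,h2,h3,h4,h5,h6]"
proof -
  let ?C = "\<lambda>e. horner_sum id e [c0,c1,c2,c3,c4,c5,c6]"
  let ?D = "\<lambda>e. horner_sum id e [d0,d1,d2,d3,d4,d5,d6]"
  let ?H = "\<lambda>e. horner_sum id e [h0,h1,h2,h3,h4,h5,h6]"
  \<comment> \<open>the terms of degree 7 to 12 of the product of the two polynomials\<close>
  let ?R = "\<lambda>e. horner_sum id e [c1*d6 + c2*d5 + c3*d4 + c4*d3 + c5*d2 + c6*d1,
    c2*d6 + c3*d5 + c4*d4 + c5*d3 + c6*d2, c3*d6 + c4*d5 + c5*d4 + c6*d3,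
    c4*d6 + c5*d5 + c6*d4, c5*d6 + c6*d5, c6*d6]"
  have split: "f e * g e - ?H e = (f e - ?C e) * g e + ?C e * (g e - ?D e) + e ^ Suc 6 * ?R e" for e
    unfolding assms(3-9) by simp algebra
  have "(\<lambda>e. (f e - ?C e) * g e) \<in> o[nhds 0](\<lambda>e. e ^ 6 * 1)"
    using f has_jet6_bigo_1[OF g] unfolding has_jet6_def by (rule landau_o.small_big_mult)
  moreover have "(\<lambda>e. ?C e * (g e - ?D e)) \<in> o[nhds 0](\<lambda>e. 1 * e ^ 6)"
    using g unfolding has_jet6_def
    by (rule landau_o.big_small_mult[OF bigo_1_if_tendsto[OF tendsto_nhds_horner_sum]])
  moreover have "(\<lambda>e. e ^ Suc 6 * ?R e) \<in> o[nhds 0](\<lambda>e. e ^ 6)"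
    by (rule smallo_nhds_0_power_Suc_mult[OF bigo_1_if_tendsto[OF tendsto_nhds_horner_sum]])
  ultimately show ?thesis
    unfolding has_jet6_def split by (simp add: sum_in_smallo(1))
qed

lemma has_jet6_divide:
  assumes d: "has_jet6 d [D0,D1,D2,D3,D4,D5,D6]" and x: "has_jet6 x [X0,X1,X2,X3,X4,X5,X6]"
    and "X0 \<noteq> 0"
    and "D0 = Q0*X0"
    "D1 = Q0*X1 + Q1*X0"
    "D2 = Q0*X2 + Q1*X1 + Q2*X0"
    "D3 = Q0*X3 + Q1*X2 + Q2*X1 + Q3*X0"
    "D4 = Q0*X4 + Q1*X3 + Q2*X2 + Q3*X1 + Q4*X0"
    "D5 = Q0*X5 + Q1*X4 + Q2*X3 + Q3*X2 + Q4*X1 + Q5*X0"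
    "D6 = Q0*X6 + Q1*X5 + Q2*X4 + Q3*X3 + Q4*X2 + Q5*X1 + Q6*X0"
  shows "has_jet6 (\<lambda>e. d e / x e) [Q0,Q1,Q2,Q3,Q4,Q5,Q6]"
proof -
  let ?Q = "\<lambda>e. horner_sum id e [Q0,Q1,Q2,Q3,Q4,Q5,Q6]"
  let ?D = "\<lambda>e. horner_sum id e [D0,D1,D2,D3,D4,D5,D6]"
  have "has_jet6 (\<lambda>e. ?Q e * x e) [D0,D1,D2,D3,D4,D5,D6]"
    by (rule has_jet6_mult[OF has_jet6_horner_sum x]) (simp_all add: assms(4-10))
  with d have "(\<lambda>e. (d e - ?D e) - (?Q e * x e - ?D e)) \<in> o[nhds 0](\<lambda>e. e ^ 6)"
    unfolding has_jet6_def by (rule sum_in_smallo(2))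
  moreover have x_lim: "(x \<longlongrightarrow> X0) (nhds 0)"
    by (rule has_jet6_tendsto[OF x])
  then have "(\<lambda>e. 1 / x e) \<in> O[nhds 0](\<lambda>_. 1)"
    using \<open>X0 \<noteq> 0\<close> by (intro bigo_1_if_tendsto[OF tendsto_divide[OF tendsto_const]])
  ultimately have "(\<lambda>e. (d e - ?Q e * x e) * (1 / x e)) \<in> o[nhds 0](\<lambda>e. e ^ 6 * 1)"
    by (auto dest: landau_o.small_big_mult)
  moreover have "eventually (\<lambda>e. x e \<noteq> 0) (nhds 0)"
    by (rule tendsto_imp_eventually_ne[OF x_lim \<open>X0 \<noteq> 0\<close>])
  then have "eventually (\<lambda>e. (d e - ?Q e * x e) * (1 / x e) = d e / x e - ?Q e) (nhds 0)"
    by eventually_elim (simp add: field_simps)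
  ultimately show ?thesis
    unfolding has_jet6_def by (simp add: landau_o.small.in_cong)
qed

lemma has_jet6_bigo_id:
  assumes "has_jet6 q (0 # cs)" shows "q \<in> O[nhds 0](\<lambda>e. e)"
proof -
  have "(\<lambda>e::real. e * e ^ 5) \<in> O[nhds 0](\<lambda>e. e * 1)"
    by (intro landau_o.big.mult_left bigo_1_if_tendsto[where c = 0])
       (auto intro!: tendsto_eq_intros filterlim_ident)
  then have "(\<lambda>e. q e - horner_sum id e (0 # cs)) \<in> O[nhds 0](\<lambda>e. e)"
    using assms unfolding has_jet6_def
    by (auto intro: landau_o.small_big_trans landau_o.small_imp_big simp: power_Suc[symmetric])
  moreover have "(\<lambda>e. e * horner_sum id e cs) \<in> O[nhds 0](\<lambda>e. e * 1)"
    by (intro landau_o.big.mult_left bigo_1_if_tendsto[OF tendsto_nhds_horner_sum])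
  ultimately show ?thesis
    by (auto dest: sum_in_bigo(1))
qed

lemma has_jet6_compose:
  assumes m: "has_jet6 m c" and q: "has_jet6 q (0 # cs)"
    and "has_jet6 (\<lambda>e. horner_sum id (q e) c) h"
  shows "has_jet6 (\<lambda>e. m (q e)) h"
proof -
  have "filterlim q (nhds 0) (nhds 0)"
    by (rule has_jet6_tendsto[OF q])
  with m have "(\<lambda>e. m (q e) - horner_sum id (q e) c) \<in> o[nhds 0](\<lambda>e. q e ^ 6)"
    unfolding has_jet6_def by (rule landau_o.small.compose)
  also have "(\<lambda>e. q e ^ 6) \<in> O[nhds 0](\<lambda>e. e ^ 6)"
    by (rule landau_o.big_power[OF has_jet6_bigo_id[OF q]])
  finally have "(\<lambda>e. m (q e) - horner_sum id (q e) c) \<in> o[nhds 0](\<lambda>e. e ^ 6)" .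
  with assms(3) show ?thesis
    unfolding has_jet6_def by (auto dest: sum_in_smallo(1))
qed

lemma has_jet6_compose_even:
  assumes f: "has_jet6 f [1,0,c1,0,c2,0,c3]" and q: "has_jet6 q [0,Q1,Q2,Q3,Q4,Q5,Q6]"
    and "h2 = c1*Q1^2"
    "h3 = 2*c1*Q1*Q2"
    "h4 = c1*(2*Q1*Q3 + Q2^2) + c2*Q1^4"
    "h5 = c1*(2*Q1*Q4 + 2*Q2*Q3) + 4*c2*Q1^3*Q2"
    "h6 = c1*(2*Q1*Q5 + 2*Q2*Q4 + Q3^2) + c2*(4*Q1^3*Q3 + 6*Q1^2*Q2^2) + c3*Q1^6"
  shows "has_jet6 (\<lambda>e. f (q e)) [1,0,h2,h3,h4,h5,h6]"
proof (rule has_jet6_compose[OF f q])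
  define q2 where "q2 e = q e * q e" for e
  define q4 where "q4 e = q2 e * q2 e" for e
  define q6 where "q6 e = q4 e * q2 e" for e
  have J2: "has_jet6 q2 [0,0,Q1^2,2*Q1*Q2,2*Q1*Q3 + Q2^2,2*Q1*Q4 + 2*Q2*Q3,2*Q1*Q5 + 2*Q2*Q4 + Q3^2]"
    unfolding q2_def[abs_def] by (rule has_jet6_mult[OF q q]) (simp_all add: power2_eq_square)
  have J4: "has_jet6 q4 [0,0,0,0,Q1^4,4*Q1^3*Q2,4*Q1^3*Q3 + 6*Q1^2*Q2^2]"
    unfolding q4_def[abs_def] by (rule has_jet6_mult[OF J2 J2]) (algebra | simp)+
  have J6: "has_jet6 q6 [0,0,0,0,0,0,Q1^6]"
    unfolding q6_def[abs_def] by (rule has_jet6_mult[OF J4 J2]) (algebra | simp)+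
  have "has_jet6 (\<lambda>e. (1 + c1 * q2 e) + c2 * q4 e + c3 * q6 e) [1,0,h2,h3,h4,h5,h6]"
    using has_jet6_add[OF has_jet6_add[OF has_jet6_add[OF has_jet6_horner_sum[of "[1,0,0,0,0,0,0]"]
        has_jet6_cmult[OF J2, of c1]] has_jet6_cmult[OF J4, of c2]] has_jet6_cmult[OF J6, of c3]]
    by (simp add: assms(3-7) algebra_simps)
  moreover have "horner_sum id (q e) [1,0,c1,0,c2,0,c3] = (1 + c1 * q2 e) + c2 * q4 e + c3 * q6 e" for e
    by (simp add: q2_def q4_def q6_def) algebra
  ultimately show "has_jet6 (\<lambda>e. horner_sum id (q e) [1,0,c1,0,c2,0,c3]) [1,0,h2,h3,h4,h5,h6]"
    by (simp only:)
qed

lemma has_jet6_reflect: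
  assumes "has_jet6 f [c0,c1,c2,c3,c4,c5,c6]"
  shows "has_jet6 (\<lambda>e. f (-e)) [c0,-c1,c2,-c3,c4,-c5,c6]"
proof -
  have "filterlim (\<lambda>e::real. - e) (nhds 0) (nhds 0)"
    using tendsto_minus[OF filterlim_ident, of "0::real"] by simp
  from landau_o.small.compose[OF assms[unfolded has_jet6_def] this]
  have "(\<lambda>e. f (-e) - horner_sum id (-e) [c0,c1,c2,c3,c4,c5,c6]) \<in> o[nhds 0](\<lambda>e. e ^ 6)"
    by simp
  moreover have "horner_sum id (-e) [c0,c1,c2,c3,c4,c5,c6] = horner_sum id e [c0,-c1,c2,-c3,c4,-c5,c6]" for e
    by (simp add: algebra_simps)
  ultimately show ?thesis
    unfolding has_jet6_def by (simp only:)
qed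

lemma horner_sum_smallo_imp_zero:
  "(\<lambda>e. horner_sum id e cs) \<in> o[at (0::real)](\<lambda>e. e ^ n) \<Longrightarrow> length cs \<le> Suc n \<Longrightarrow> set cs \<subseteq> {0}"
proof (induction cs arbitrary: n)
  case Nil
  then show ?case by simp
next
  case (Cons c cs)
  have "(\<lambda>e::real. e ^ n) \<in> O[at 0](\<lambda>_. 1)"
    by (intro bigo_1_if_tendsto[where c = "0 ^ n"]) (auto intro!: tendsto_eq_intros)
  with Cons.prems(1) have "(\<lambda>e. horner_sum id e (c # cs)) \<in> o[at 0](\<lambda>_. 1)"
    by (rule landau_o.small_big_trans)
  then have "((\<lambda>e. horner_sum id e (c # cs)) \<longlongrightarrow> 0) (at 0)"
    using smalloD_tendsto by fastforce
  moreover have "((\<lambda>e. horner_sum id e (c # cs)) \<longlongrightarrow> c) (at 0)"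
    using isCont_horner_sum[of 0 "c # cs"] by (simp add: isCont_def)
  ultimately have "c = 0"
    by (rule LIM_unique[symmetric])
  show ?case
  proof (cases "cs = []")
    case True
    with \<open>c = 0\<close> show ?thesis by simp
  next
    case False
    with Cons.prems(2) obtain m where n: "n = Suc m" by (cases n) auto
    have "(\<lambda>e. e * horner_sum id e cs) \<in> o[at 0](\<lambda>e. e * e ^ m)"
      using Cons.prems(1) \<open>c = 0\<close> n by (simp add: id_def)
    then have "(\<lambda>e. horner_sum id e cs) \<in> o[at 0](\<lambda>e. e ^ m)"
      by (subst (asm) landau_o.small.mult_cancel_left) (auto simp: eventually_at_filter)
    with Cons.IH[of m] Cons.prems(2) n \<open>c = 0\<close> show ?thesis by (simp add: id_def)
  qed
qed

lemma has_jet6_unique: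
  assumes "has_jet6 f [c0,c1,c2,c3,c4,c5,c6]" "has_jet6 f [d0,d1,d2,d3,d4,d5,d6]"
  shows "c0 = d0 \<and> c1 = d1 \<and> c2 = d2 \<and> c3 = d3 \<and> c4 = d4 \<and> c5 = d5 \<and> c6 = d6"
proof -
  have "(\<lambda>e. (f e - horner_sum id e [d0,d1,d2,d3,d4,d5,d6]) - (f e - horner_sum id e [c0,c1,c2,c3,c4,c5,c6]))
          \<in> o[nhds 0](\<lambda>e. e ^ 6)"
    by (rule sum_in_smallo(2)[OF assms(2,1)[unfolded has_jet6_def]])
  also have "(\<lambda>e. (f e - horner_sum id e [d0,d1,d2,d3,d4,d5,d6]) - (f e - horner_sum id e [c0,c1,c2,c3,c4,c5,c6]))
      = (\<lambda>e. horner_sum id e [c0-d0,c1-d1,c2-d2,c3-d3,c4-d4,c5-d5,c6-d6])"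
    by (simp add: fun_eq_iff algebra_simps)
  finally have "(\<lambda>e. horner_sum id e [c0-d0,c1-d1,c2-d2,c3-d3,c4-d4,c5-d5,c6-d6]) \<in> o[at 0](\<lambda>e. e ^ 6)"
    by (rule landau_o.small.filter_mono[rotated]) (simp add: at_within_def)
  from horner_sum_smallo_imp_zero[OF this] show ?thesis by simp
qed

section \<open>Profiles of means\<close>

definition has_profile :: "(real \<Rightarrow> real \<Rightarrow> real) \<Rightarrow> (real \<Rightarrow> real) \<Rightarrow> bool" where
  "has_profile F f \<longleftrightarrow> (\<forall>u>0. \<forall>v>0. F u v = (u + v) / 2 * f ((v - u) / (u + v)))"

lemma homogeneous_mean_profile:
  assumes "homogeneous_mean M" shows "has_profile M (\<lambda>e. M (1 - e) (1 + e))"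
  unfolding has_profile_def
proof (intro allI impI)
  fix u v :: real assume "u > 0" "v > 0"
  define x where "x = (u + v) / 2"
  define q where "q = (v - u) / (u + v)"
  have "x > 0" "1 - q > 0" "1 + q > 0" "x * (1 - q) = u" "x * (1 + q) = v"
    using \<open>u > 0\<close> \<open>v > 0\<close> by (simp_all add: x_def q_def field_simps)
  with assms show "M u v = (u + v) / 2 * M (1 - (v - u) / (u + v)) (1 + (v - u) / (u + v))"
    unfolding homogeneous_mean_def x_def q_def by metis
qed

lemma has_profile_symmetric:
  assumes "has_profile F f" and even: "\<And>e. \<bar>e\<bar> < 1 \<Longrightarrow> f (-e) = f e" and "s > 0" "t > 0"
  shows "F s t = F t s"
proof -
  define q where "q = (t - s) / (s + t)"
  have "\<bar>q\<bar> < 1" "(s - t) / (t + s) = - q"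
    using \<open>s > 0\<close> \<open>t > 0\<close> by (simp_all add: q_def abs_less_iff field_simps)
  moreover have "F s t = (s + t) / 2 * f q" "F t s = (t + s) / 2 * f ((s - t) / (t + s))"
    using assms(1,3,4) unfolding has_profile_def q_def by simp_all
  ultimately show ?thesis
    using even by (simp add: add.commute)
qed

lemma eventually_nhds_abs_less: "r > 0 \<Longrightarrow> eventually (\<lambda>e::real. \<bar>e\<bar> < r) (nhds 0)"
  using eventually_nhds_in_open[of "{-r<..<r}" 0] by (auto simp: abs_less_iff elim: eventually_mono)

lemma has_profile_eventually_eq:
  assumes "has_profile F f" and "(u \<longlongrightarrow> 1) (nhds 0)" "(v \<longlongrightarrow> 1) (nhds 0)"
  shows "eventually (\<lambda>e. F (u e) (v e) = (u e + v e) / 2 * f ((v e - u e) / (u e + v e))) (nhds 0)"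
proof -
  have "eventually (\<lambda>e. u e > 0 \<and> v e > 0) (nhds 0)"
    using assms(2,3) by (auto intro!: eventually_conj order_tendstoD(1))
  with assms(1) show ?thesis
    unfolding has_profile_def by (auto elim: eventually_mono)
qed

lemma has_jet6_mean_left_endpoint:
  assumes F: "has_profile F f" and f: "has_jet6 f [1,0,c1,0,c2,0,c3]"
    and mu: "has_jet6 mu [1,0,a1,0,a2,0,a3]"
  shows "has_jet6 (\<lambda>e. F (1 - e) (mu e))
    [1, -1/2, 1/2*a1 + 1/4*c1, 1/8*c1 + 1/2*a1*c1,
     1/2*a2 + 1/16*c1 + 1/16*c2 + 1/8*a1*c1 + 1/4*a1^2*c1,
     1/32*c1 + 3/32*c2 + 1/4*a1*c2 + 1/2*a2*c1 - 1/8*a1^2*c1,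
     1/2*a3 + 1/64*c1 + 3/32*c2 + 1/64*c3 - 1/32*a1*c1 + 9/32*a1*c2 + 1/8*a2*c1
       + 1/2*a1*a2*c1 - 1/8*a1^2*c1 + 3/8*a1^2*c2 - 1/8*a1^3*c1]"
proof -
  define q where "q e = (mu e - (1 - e)) / ((1 - e) + mu e)" for e
  have u: "has_jet6 (\<lambda>e. 1 - e) [1,-1,0,0,0,0,0]"
    by (rule has_jet6_eq[OF has_jet6_horner_sum]) simp_all
  have sum: "has_jet6 (\<lambda>e. (1 - e) + mu e) [2,-1,a1,0,a2,0,a3]"
    by (rule has_jet6_eq[OF has_jet6_add[OF u mu]]) simp_all
  have diff: "has_jet6 (\<lambda>e. mu e - (1 - e)) [0,1,a1,0,a2,0,a3]"
    by (rule has_jet6_eq[OF has_jet6_add[OF mu has_jet6_cmult[OF u, of "-1"]]]) simp_all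
  have q: "has_jet6 q [0, 1/2, 1/4 + 1/2*a1, 1/8, 1/16 - 1/8*a1 + 1/2*a2 - 1/4*a1^2,
      1/32 - 1/8*a1 - 1/8*a1^2, 1/64 - 3/32*a1 - 1/8*a2 + 1/2*a3 - 1/2*a1*a2 + 1/8*a1^3]"
    unfolding q_def[abs_def] by (rule has_jet6_divide[OF diff sum]) (algebra | simp)+
  have fq: "has_jet6 (\<lambda>e. f (q e)) [1, 0, 1/4*c1, 1/4*c1 + 1/2*a1*c1,
      3/16*c1 + 1/16*c2 + 1/4*a1*c1 + 1/4*a1^2*c1,
      1/8*c1 + 1/8*c2 + 1/4*a1*c2 + 1/2*a2*c1 - 1/4*a1^2*c1,
      5/64*c1 + 5/32*c2 + 1/64*c3 - 1/8*a1*c1 + 3/8*a1*c2 + 1/4*a2*c1 + 1/2*a1*a2*c1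
        - 3/8*a1^2*c1 + 3/8*a1^2*c2 - 1/4*a1^3*c1]"
    by (rule has_jet6_compose_even[OF f q]) (algebra | simp)+
  have mid: "has_jet6 (\<lambda>e. ((1 - e) + mu e) / 2) [1,-1/2,1/2*a1,0,1/2*a2,0,1/2*a3]"
    by (rule has_jet6_eq[OF has_jet6_cmult[OF sum, of "1/2"]]) simp_all
  have "has_jet6 (\<lambda>e. ((1 - e) + mu e) / 2 * f (q e))
    [1, -1/2, 1/2*a1 + 1/4*c1, 1/8*c1 + 1/2*a1*c1,
     1/2*a2 + 1/16*c1 + 1/16*c2 + 1/8*a1*c1 + 1/4*a1^2*c1,
     1/32*c1 + 3/32*c2 + 1/4*a1*c2 + 1/2*a2*c1 - 1/8*a1^2*c1,
     1/2*a3 + 1/64*c1 + 3/32*c2 + 1/64*c3 - 1/32*a1*c1 + 9/32*a1*c2 + 1/8*a2*c1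
       + 1/2*a1*a2*c1 - 1/8*a1^2*c1 + 3/8*a1^2*c2 - 1/8*a1^3*c1]"
    by (rule has_jet6_mult[OF mid fq]) (algebra | simp)+
  moreover have "((\<lambda>e::real. 1 - e) \<longlongrightarrow> 1) (nhds 0)"
    using has_jet6_tendsto[OF u] by simp
  from has_profile_eventually_eq[OF F this has_jet6_tendsto[OF mu]]
  have "eventually (\<lambda>e. F (1 - e) (mu e) = ((1 - e) + mu e) / 2 * f (q e)) (nhds 0)"
    unfolding q_def by simp
  ultimately show ?thesis
    by (rule has_jet6_cong)
qed

lemma has_jet6_mean_reflected_pair:
  assumes F: "has_profile F f" and f: "has_jet6 f [1,0,c1,0,c2,0,c3]"
    and y: "has_jet6 y [1,w1,w2,w3,w4,w5,w6]"
  shows "has_jet6 (\<lambda>e. F (y e) (y (-e)))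
    [1, 0, w2 + c1*w1^2, 0, w4 + 2*c1*w1*w3 - c1*w1^2*w2 + c2*w1^4, 0,
     w6 + 2*c1*w1*w5 + c1*w3^2 - 2*c1*w1*w2*w3 - c1*w1^2*w4 + c1*w1^2*w2^2
       + 4*c2*w1^3*w3 - 3*c2*w1^4*w2 + c3*w1^6]"
proof -
  define q where "q e = (y (-e) - y e) / (y e + y (-e))" for e
  have y': "has_jet6 (\<lambda>e. y (-e)) [1,-w1,w2,-w3,w4,-w5,w6]"
    using has_jet6_reflect[OF y] by simp
  have sum: "has_jet6 (\<lambda>e. y e + y (-e)) [2,0,2*w2,0,2*w4,0,2*w6]"
    by (rule has_jet6_eq[OF has_jet6_add[OF y y']]) simp_all
  have diff: "has_jet6 (\<lambda>e. y (-e) - y e) [0,-2*w1,0,-2*w3,0,-2*w5,0]"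
    by (rule has_jet6_eq[OF has_jet6_add[OF y' has_jet6_cmult[OF y, of "-1"]]]) simp_all
  have q: "has_jet6 q [0, -w1, 0, -w3 + w1*w2, 0, -w5 + w1*w4 + w2*w3 - w1*w2^2, 0]"
    unfolding q_def[abs_def] by (rule has_jet6_divide[OF diff sum]) (algebra | simp)+
  have fq: "has_jet6 (\<lambda>e. f (q e)) [1, 0, c1*w1^2, 0, 2*c1*w1*w3 - 2*c1*w1^2*w2 + c2*w1^4, 0,
      2*c1*w1*w5 + c1*w3^2 - 4*c1*w1*w2*w3 - 2*c1*w1^2*w4 + 3*c1*w1^2*w2^2
        + 4*c2*w1^3*w3 - 4*c2*w1^4*w2 + c3*w1^6]"
    by (rule has_jet6_compose_even[OF f q]) (algebra | simp)+
  have mid: "has_jet6 (\<lambda>e. (y e + y (-e)) / 2) [1,0,w2,0,w4,0,w6]"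
    by (rule has_jet6_eq[OF has_jet6_cmult[OF sum, of "1/2"]]) simp_all
  have "has_jet6 (\<lambda>e. (y e + y (-e)) / 2 * f (q e))
    [1, 0, w2 + c1*w1^2, 0, w4 + 2*c1*w1*w3 - c1*w1^2*w2 + c2*w1^4, 0,
     w6 + 2*c1*w1*w5 + c1*w3^2 - 2*c1*w1*w2*w3 - c1*w1^2*w4 + c1*w1^2*w2^2
       + 4*c2*w1^3*w3 - 3*c2*w1^4*w2 + c3*w1^6]"
    by (rule has_jet6_mult[OF mid fq]) (algebra | simp)+
  moreover have "eventually (\<lambda>e. F (y e) (y (-e)) = (y e + y (-e)) / 2 * f (q e)) (nhds 0)"
    using has_profile_eventually_eq[OF F has_jet6_tendsto[OF y] has_jet6_tendsto[OF y']]
    unfolding q_def by simp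
  ultimately show ?thesis
    by (rule has_jet6_cong)
qed

lemma mean_pos:
  assumes "is_mean M" "s > 0" "t > 0" shows "M s t > 0"
proof -
  have "min s t \<le> M s t"
    using assms unfolding is_mean_def by blast
  moreover have "min s t > 0"
    using assms(2,3) by simp
  ultimately show ?thesis by linarith
qed

lemma mean_profile_near_1:
  assumes "is_mean M" "\<bar>e\<bar> < 1" shows "\<bar>M (1 - e) (1 + e) - 1\<bar> \<le> \<bar>e\<bar>"
proof -
  have "min (1 - e) (1 + e) \<le> M (1 - e) (1 + e) \<and> M (1 - e) (1 + e) \<le> max (1 - e) (1 + e)"
    using assms unfolding is_mean_def by (simp add: abs_less_iff)
  then show ?thesis
    by (auto simp: min_def max_def abs_le_iff split: if_split_asm)
qed

section \<open>Jets of good means\<close>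

lemma has_jet6_if_even:
  assumes right: "(\<lambda>e. f e - horner_sum id e [c0,0,c2,0,c4,0,c6]) \<in> o[at_right 0](\<lambda>e. e ^ 6)"
    and even: "\<And>e. \<bar>e\<bar> < 1 \<Longrightarrow> f (-e) = f e" and "f 0 = c0"
  shows "has_jet6 f [c0,0,c2,0,c4,0,c6]"
proof -
  define D where "D e = f e - horner_sum id e [c0,0,c2,0,c4,0,c6]" for e
  have "eventually (\<lambda>e. D e = D (-e)) (at_right 0)"
    unfolding eventually_at_right_field
    by (intro exI[of _ 1]) (simp add: D_def even)
  with right have "(\<lambda>e. D (-e)) \<in> o[at_right 0](\<lambda>e. (-e) ^ 6)"
    unfolding D_def[symmetric] by (simp add: landau_o.small.in_cong)
  then have "D \<in> o[at_left 0](\<lambda>e. e ^ 6)"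
    by (simp add: at_left_minus landau_o.small.in_filtermap_iff)
  moreover have "D \<in> o[at_right 0](\<lambda>e. e ^ 6)"
    using right unfolding D_def .
  ultimately have "D \<in> o[at 0](\<lambda>e. e ^ 6)"
    unfolding at_eq_sup_left_right by (rule landau_o.small.sup)
  then show ?thesis
    unfolding has_jet6_def D_def[symmetric] by (rule smallo_nhds_if_smallo_at) (simp add: D_def \<open>f 0 = c0\<close>)
qed

lemma inverse_powr_odd:
  fixes e :: real
  assumes "e > 0" shows "inverse e powr (1 - 2 * real n) = e ^ (2 * n) / e"
proof -
  have "e powr (1 - 2 * real n) = e / e ^ (2 * n)"
    using assms by (simp add: powr_diff powr_realpow[symmetric])
  then show ?thesis
    by (simp add: inverse_powr)
qed

lemma homogeneous_mean_truncated_expansion_inverse: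
  assumes "homogeneous_mean M" "0 < e" "e < 1"
  shows "M (inverse e - 1) (inverse e + 1) - (\<Sum>n\<le>3. a n * 1 ^ (2 * n) * inverse e powr (1 - 2 * real n))
    = inverse e * (M (1 - e) (1 + e) - horner_sum id e [a 0, 0, a 1, 0, a 2, 0, a 3])"
proof -
  have "M (inverse e * (1 - e)) (inverse e * (1 + e)) = inverse e * M (1 - e) (1 + e)"
    using assms unfolding homogeneous_mean_def by simp
  moreover have "inverse e * (1 - e) = inverse e - 1" "inverse e * (1 + e) = inverse e + 1"
    using assms by (simp_all add: field_simps)
  moreover have "(\<Sum>n\<le>3. a n * 1 ^ (2 * n) * inverse e powr (1 - 2 * real n))
      = (\<Sum>n\<le>3. a n * e ^ (2 * n) / e)"
    using assms by (intro sum.cong) (simp_all add: inverse_powr_odd)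
  ultimately show ?thesis
    using assms by (simp add: eval_nat_numeral atMost_Suc field_simps)
qed

lemma sym_asymp_expansion_profile_at_right:
  assumes hom: "homogeneous_mean M" and exp: "has_sym_asymp_expansion M a"
  shows "(\<lambda>e. M (1 - e) (1 + e) - horner_sum id e [a 0, 0, a 1, 0, a 2, 0, a 3])
           \<in> o[at_right 0](\<lambda>e. e ^ 6)"
proof -
  define D where "D e = M (1 - e) (1 + e) - horner_sum id e [a 0, 0, a 1, 0, a 2, 0, a 3]" for e
  have "(\<lambda>x. M (x - 1) (x + 1) - (\<Sum>n\<le>3. a n * 1 ^ (2 * n) * x powr (1 - 2 * real n)))
          \<in> o[at_top](\<lambda>x. x powr (1 - 2 * real (3::nat)))"
    using exp unfolding has_sym_asymp_expansion_def by blast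
  from landau_o.small.compose[OF this filterlim_inverse_at_top_right]
  have L: "(\<lambda>e. M (inverse e - 1) (inverse e + 1)
            - (\<Sum>n\<le>3. a n * 1 ^ (2 * n) * inverse e powr (1 - 2 * real n)))
          \<in> o[at_right 0](\<lambda>e. inverse e powr (1 - 2 * real (3::nat)))" .
  have ev: "eventually (\<lambda>e. M (inverse e - 1) (inverse e + 1)
            - (\<Sum>n\<le>3. a n * 1 ^ (2 * n) * inverse e powr (1 - 2 * real n)) = inverse e * D e
          \<and> inverse e powr (1 - 2 * real (3::nat)) = e ^ 5) (at_right 0)"
    unfolding eventually_at_right_field
  proof (intro exI[of _ 1] conjI allI impI)
    fix e :: real assume "0 < e" "e < 1"
    then show "M (inverse e - 1) (inverse e + 1)
        - (\<Sum>n\<le>3. a n * 1 ^ (2 * n) * inverse e powr (1 - 2 * real n)) = inverse e * D e"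
      unfolding D_def by (rule homogeneous_mean_truncated_expansion_inverse[OF hom])
    show "inverse e powr (1 - 2 * real (3::nat)) = e ^ 5"
      using inverse_powr_odd[OF \<open>0 < e\<close>, of 3] \<open>0 < e\<close> by (simp add: eval_nat_numeral)
  qed simp_all
  have "(\<lambda>e. inverse e * D e) \<in> o[at_right 0](\<lambda>e. e ^ 5)"
    by (rule landau_o.small.cong_ex[OF eventually_mono[OF ev] eventually_mono[OF ev], THEN iffD1, OF _ _ L])
       simp_all
  then have "(\<lambda>e. e * (inverse e * D e)) \<in> o[at_right 0](\<lambda>e. e * e ^ 5)"
    by (rule landau_o.small.mult_left)
  moreover have "eventually (\<lambda>e. e * (inverse e * D e) = D e) (at_right (0::real))"
    by (simp add: eventually_at_right_field) (auto intro: exI[of _ 1])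
  ultimately show ?thesis
    unfolding D_def[symmetric] by (simp add: landau_o.small.in_cong eval_nat_numeral)
qed

lemma mean_profile_tendsto:
  assumes "is_mean M" shows "((\<lambda>e. M (1 - e) (1 + e)) \<longlongrightarrow> 1) (nhds 0)"
proof -
  have "eventually (\<lambda>e. norm (M (1 - e) (1 + e) - 1) \<le> norm e) (nhds 0)"
    using eventually_nhds_abs_less[OF zero_less_one]
    by (auto elim!: eventually_mono intro: mean_profile_near_1[OF assms])
  then have "((\<lambda>e. M (1 - e) (1 + e) - 1) \<longlongrightarrow> 0) (nhds 0)"
    by (rule Lim_null_comparison[OF _ tendsto_norm_zero[OF filterlim_ident]])
  then show ?thesis
    by (simp add: Lim_null[symmetric])
qed

lemma mean_profile_expansion_const:
  assumes "is_mean M"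
    and right: "(\<lambda>e. M (1 - e) (1 + e) - horner_sum id e (c0 # cs)) \<in> o[at_right 0](\<lambda>e. e ^ 6)"
  shows "c0 = 1"
proof -
  have "((\<lambda>e. M (1 - e) (1 + e) - horner_sum id e (c0 # cs)) \<longlongrightarrow> 0) (at_right 0)"
    using right by (rule smallo_imp_tendsto_zero) (auto intro!: tendsto_eq_intros)
  moreover have "((\<lambda>e. horner_sum id e (c0 # cs)) \<longlongrightarrow> horner_sum id 0 (c0 # cs)) (at_right 0)"
    by (rule tendsto_mono[OF _ tendsto_nhds_horner_sum]) (simp add: at_within_def)
  ultimately have "((\<lambda>e. (M (1 - e) (1 + e) - horner_sum id e (c0 # cs)) + horner_sum id e (c0 # cs))
      \<longlongrightarrow> 0 + horner_sum id 0 (c0 # cs)) (at_right 0)"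
    by (rule tendsto_add)
  moreover have "((\<lambda>e. M (1 - e) (1 + e)) \<longlongrightarrow> 1) (at_right 0)"
    by (rule tendsto_mono[OF _ mean_profile_tendsto[OF assms(1)]]) (simp add: at_within_def)
  ultimately show ?thesis
    by (simp add: tendsto_unique[OF trivial_limit_at_right_real])
qed

lemma good_mean_profile_jet:
  assumes "good_mean M"
  obtains a1 a2 a3 where "has_jet6 (\<lambda>e. M (1 - e) (1 + e)) [1,0,a1,0,a2,0,a3]"
proof -
  have mean: "is_mean M" and sym: "symmetric_mean M" and hom: "homogeneous_mean M"
    and "\<exists>a. has_sym_asymp_expansion M a"
    using assms unfolding good_mean_def by auto
  then obtain a :: "nat \<Rightarrow> real"
    where right: "(\<lambda>e. M (1 - e) (1 + e) - horner_sum id e [a 0, 0, a 1, 0, a 2, 0, a 3])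
      \<in> o[at_right 0](\<lambda>e. e ^ 6)"
    using sym_asymp_expansion_profile_at_right by blast
  have "a 0 = 1"
    by (rule mean_profile_expansion_const[OF mean right])
  moreover have "M 1 1 = 1"
    using mean_profile_near_1[OF mean, of 0] by simp
  moreover have "M (1 - - e) (1 + - e) = M (1 - e) (1 + e)" if "\<bar>e\<bar> < 1" for e
    using sym that unfolding symmetric_mean_def by simp
  ultimately have "has_jet6 (\<lambda>e. M (1 - e) (1 + e)) [1, 0, a 1, 0, a 2, 0, a 3]"
    using has_jet6_if_even[OF right] by simp
  then show ?thesis
    by (rule that)
qed

section \<open>Stabilizability on the level of jets\<close>

text \<open>With \<open>n\<close>, \<open>b\<close>, \<open>a\<close> the even Taylor coefficients of the profiles of \<open>N\<close>, \<open>K\<close>, \<open>M\<close>, these are the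
  coefficients of \<open>e\<^sup>2\<close>, \<open>e\<^sup>4\<close>, \<open>e\<^sup>6\<close> in \<open>n e = K (y e) (y (-e))\<close>, \<open>y e = N (1 - e) (m e)\<close>.\<close>
fun jet_stabilizes :: "real \<times> real \<times> real \<Rightarrow> real \<times> real \<times> real \<Rightarrow> real \<times> real \<times> real \<Rightarrow> bool" where
  "jet_stabilizes (n1, n2, n3) (b1, b2, b3) (a1, a2, a3) \<longleftrightarrow>
     1/2*a1 + 1/4*b1 - 3/4*n1 = 0 \<and>
     1/2*a2 + 1/16*b2 + 1/16*n1 - 15/16*n2 - 1/8*a1*b1 + 1/8*a1*n1 - 3/16*b1*n1
       - 1/2*a1*b1*n1 + 1/4*a1^2*n1 = 0 \<and>
     1/2*a3 + 1/64*b3 + 1/64*n1 + 3/32*n2 - 63/64*n3 - 3/32*a1*b2 - 1/32*a1*n1 + 9/32*a1*n2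
       - 1/8*a2*b1 + 1/8*a2*n1 - 3/64*b1*n1 - 7/64*b1*n2 - 7/64*b2*n1 + 1/2*a1*a2*n1
       + 3/32*a1*b1*n1 - 1/4*a1*b1*n2 - 1/4*a1*b2*n1 + 1/16*a1^2*b1 - 1/8*a1^2*n1
       + 3/8*a1^2*n2 - 1/2*a2*b1*n1 + 1/16*b1*n1^2 + 1/4*a1*b1*n1^2 + 5/16*a1^2*b1*n1
       - 1/8*a1^3*n1 + 1/4*a1^2*b1*n1^2 = 0"

lemma stabilizable_jet_stabilizes:
  assumes N: "symmetric_mean N" "has_profile N (\<lambda>e. N (1 - e) (1 + e))"
      "has_jet6 (\<lambda>e. N (1 - e) (1 + e)) [1,0,n1,0,n2,0,n3]"
    and K: "has_profile K (\<lambda>e. K (1 - e) (1 + e))" "has_jet6 (\<lambda>e. K (1 - e) (1 + e)) [1,0,b1,0,b2,0,b3]"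
    and M: "is_mean M" "symmetric_mean M" "has_jet6 (\<lambda>e. M (1 - e) (1 + e)) [1,0,a1,0,a2,0,a3]"
    and "stabilizable N K M"
  shows "jet_stabilizes (n1, n2, n3) (b1, b2, b3) (a1, a2, a3)"
proof -
  have "eventually (\<lambda>e. N (1 - e) (1 + e)
      = K (N (1 - e) (M (1 - e) (1 + e))) (N (1 - - e) (M (1 - - e) (1 + - e)))) (nhds 0)"
    using eventually_nhds_abs_less[OF zero_less_one]
  proof (rule eventually_mono)
    fix e :: real assume "\<bar>e\<bar> < 1"
    then have "1 - e > 0" "1 + e > 0" by auto
    define m where "m = M (1 - e) (1 + e)"
    have "m > 0" "M (1 + e) (1 - e) = m"
      using mean_pos[OF M(1)] M(2) \<open>1 - e > 0\<close> \<open>1 + e > 0\<close> unfolding symmetric_mean_def m_def by auto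
    moreover have "N m (1 + e) = N (1 + e) m"
      using N(1) \<open>m > 0\<close> \<open>1 + e > 0\<close> unfolding symmetric_mean_def by blast
    moreover have "N (1 - e) (1 + e) = K (N (1 - e) m) (N m (1 + e))"
      using \<open>stabilizable N K M\<close> \<open>1 - e > 0\<close> \<open>1 + e > 0\<close> unfolding stabilizable_def m_def by blast
    ultimately show "N (1 - e) (1 + e) = K (N (1 - e) (M (1 - e) (1 + e))) (N (1 - - e) (M (1 - - e) (1 + - e)))"
      unfolding m_def by simp
  qed
  note n_jet = has_jet6_cong[OF has_jet6_mean_reflected_pair[OF K has_jet6_mean_left_endpoint[OF N(2,3) M(3)]] this]
  from has_jet6_unique[OF N(3) n_jet] show ?thesis
    unfolding jet_stabilizes.simps by algebra
qed

lemma good_mean_jet_stabilizes_itself: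
  assumes "good_mean M" "has_jet6 (\<lambda>e. M (1 - e) (1 + e)) [1,0,a1,0,a2,0,a3]"
  shows "jet_stabilizes (a1, a2, a3) (a1, a2, a3) (a1, a2, a3)"
proof -
  have "is_mean M" "symmetric_mean M" "homogeneous_mean M" "stabilizable M M M"
    using assms(1) unfolding good_mean_def stable_mean_def stabilizable_def by auto
  with assms(2) show ?thesis
    by (intro stabilizable_jet_stabilizes homogeneous_mean_profile)
qed

lemma no_stabilizer_if_jet_incompatible:
  assumes N: "symmetric_mean N" "has_profile N (\<lambda>e. N (1 - e) (1 + e))"
      "has_jet6 (\<lambda>e. N (1 - e) (1 + e)) [1,0,n1,0,n2,0,n3]"
    and incompatible: "\<And>a1 a2 a3 b1 b2 b3. jet_stabilizes (a1, a2, a3) (a1, a2, a3) (a1, a2, a3)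
      \<Longrightarrow> jet_stabilizes (b1, b2, b3) (b1, b2, b3) (b1, b2, b3) \<Longrightarrow> \<not> jet_stabilizes (n1, n2, n3) (b1, b2, b3) (a1, a2, a3)"
  shows "\<not> (\<exists>K M. good_mean K \<and> good_mean M \<and> stabilizable N K M)"
proof
  assume "\<exists>K M. good_mean K \<and> good_mean M \<and> stabilizable N K M"
  then obtain K M where K: "good_mean K" and M: "good_mean M" and "stabilizable N K M"
    by blast
  obtain a1 a2 a3 where m: "has_jet6 (\<lambda>e. M (1 - e) (1 + e)) [1,0,a1,0,a2,0,a3]"
    using good_mean_profile_jet[OF M] .
  obtain b1 b2 b3 where k: "has_jet6 (\<lambda>e. K (1 - e) (1 + e)) [1,0,b1,0,b2,0,b3]"
    using good_mean_profile_jet[OF K] .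
  have "is_mean M" "symmetric_mean M" "homogeneous_mean K"
    using K M unfolding good_mean_def by auto
  then have "jet_stabilizes (n1, n2, n3) (b1, b2, b3) (a1, a2, a3)"
    using stabilizable_jet_stabilizes[OF N homogeneous_mean_profile k _ _ m \<open>stabilizable N K M\<close>] by blast
  with incompatible[OF good_mean_jet_stabilizes_itself[OF M m] good_mean_jet_stabilizes_itself[OF K k]]
  show False ..
qed

section \<open>Seiffert-type means\<close>

definition seiffert_type :: "(real \<Rightarrow> real \<Rightarrow> real) \<Rightarrow> (real \<Rightarrow> real) \<Rightarrow> bool" where
  "seiffert_type N g \<longleftrightarrow> (\<forall>s t. N s t = (if s = t then s else (t - s) / (2 * g ((t - s) / (t + s)))))"

lemma seiffert_type_profile_eq:
  assumes "seiffert_type N g" "q \<noteq> 0" shows "N (1 - q) (1 + q) = q / g q"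
  using assms unfolding seiffert_type_def by simp

lemma seiffert_type_profile:
  assumes "seiffert_type N g" shows "has_profile N (\<lambda>e. N (1 - e) (1 + e))"
  unfolding has_profile_def
proof (intro allI impI)
  fix u v :: real assume "u > 0" "v > 0"
  define q where "q = (v - u) / (u + v)"
  show "N u v = (u + v) / 2 * N (1 - (v - u) / (u + v)) (1 + (v - u) / (u + v))"
  proof (cases "u = v")
    case True
    with assms show ?thesis unfolding seiffert_type_def by simp
  next
    case False
    have "u + v > 0"
      using \<open>u > 0\<close> \<open>v > 0\<close> by simp
    with False have "q \<noteq> 0" "(u + v) / 2 * q = (v - u) / 2"
      by (simp_all add: q_def field_simps)
    with assms False show ?thesis
      unfolding q_def[symmetric] seiffert_type_profile_eq[OF assms \<open>q \<noteq> 0\<close>]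
      unfolding seiffert_type_def by (simp add: q_def add.commute)
  qed
qed

lemma seiffert_type_profile_even:
  assumes "seiffert_type N g" and odd: "\<And>y. \<bar>y\<bar> < 1 \<Longrightarrow> g (-y) = - g y" and "\<bar>e\<bar> < 1"
  shows "N (1 - - e) (1 + - e) = N (1 - e) (1 + e)"
  using seiffert_type_profile_eq[OF assms(1), of e] seiffert_type_profile_eq[OF assms(1), of "-e"]
    odd[OF \<open>\<bar>e\<bar> < 1\<close>] by (cases "e = 0") simp_all

lemma seiffert_type_no_stabilizer:
  assumes N: "seiffert_type N g" and odd: "\<And>y. \<bar>y\<bar> < 1 \<Longrightarrow> g (-y) = - g y"
    and asymp: "(\<lambda>e. e / g e - horner_sum id e [1,0,n1,0,n2,0,n3]) \<in> o[at_right 0](\<lambda>e. e ^ 6)"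
    and incompatible: "\<And>a1 a2 a3 b1 b2 b3. jet_stabilizes (a1, a2, a3) (a1, a2, a3) (a1, a2, a3)
      \<Longrightarrow> jet_stabilizes (b1, b2, b3) (b1, b2, b3) (b1, b2, b3) \<Longrightarrow> \<not> jet_stabilizes (n1, n2, n3) (b1, b2, b3) (a1, a2, a3)"
  shows "\<not> (\<exists>K M. good_mean K \<and> good_mean M \<and> stabilizable N K M)"
proof (rule no_stabilizer_if_jet_incompatible[OF _ seiffert_type_profile[OF N] _ incompatible])
  show "symmetric_mean N"
    unfolding symmetric_mean_def
    using has_profile_symmetric[OF seiffert_type_profile[OF N] seiffert_type_profile_even[OF N odd]]
    by blast
  have "eventually (\<lambda>e. N (1 - e) (1 + e) - horner_sum id e [1,0,n1,0,n2,0,n3]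
      = e / g e - horner_sum id e [1,0,n1,0,n2,0,n3]) (at_right 0)"
    using seiffert_type_profile_eq[OF N] by (auto simp: eventually_at_right_field intro: exI[of _ 1])
  from landau_o.small.in_cong[OF this] asymp
  have "(\<lambda>e. N (1 - e) (1 + e) - horner_sum id e [1,0,n1,0,n2,0,n3]) \<in> o[at_right 0](\<lambda>e. e ^ 6)"
    by blast
  then show "has_jet6 (\<lambda>e. N (1 - e) (1 + e)) [1,0,n1,0,n2,0,n3]"
    by (rule has_jet6_if_even) (use N seiffert_type_profile_even[OF N odd] in \<open>simp_all add: seiffert_type_def\<close>)
qed

lemma seiffert_P_asymp:
  "(\<lambda>e::real. e / arcsin e - horner_sum id e [1,0,-1/6,0,-17/360,0,-367/15120]) \<in> o[at_right 0](\<lambda>e. e ^ 6)"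
proof -
  let ?P = "\<lambda>e::real. horner_sum id e [1,0,-1/6,0,-17/360,0,-367/15120]"
  \<comment> \<open>\<open>real_asymp\<close> does not support \<open>arcsin\<close>\<close>
  have "eventually (\<lambda>e. e / arctan (e / sqrt (1 - e^2)) - ?P e = e / arcsin e - ?P e) (at_right 0)"
    by (auto simp: eventually_at_right_field arcsin_arctan intro: exI[of _ 1])
  moreover have "(\<lambda>e. e / arctan (e / sqrt (1 - e^2)) - ?P e) \<in> o[at_right 0](\<lambda>e. e ^ 6)"
    by simp real_asymp
  ultimately show ?thesis
    by (rule landau_o.small.in_cong[THEN iffD1])
qed

lemma seiffert_T_asymp:
  "(\<lambda>e::real. e / arctan e - horner_sum id e [1,0,1/3,0,-4/45,0,44/945]) \<in> o[at_right 0](\<lambda>e. e ^ 6)"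
  by simp real_asymp

lemma neuman_sandor_asymp:
  "(\<lambda>e::real. e / arsinh e - horner_sum id e [1,0,1/6,0,-17/360,0,367/15120]) \<in> o[at_right 0](\<lambda>e. e ^ 6)"
  unfolding arsinh_real_def by simp real_asymp

lemma seiffert_P_jet_incompatible:
  "jet_stabilizes (a1, a2, a3) (a1, a2, a3) (a1, a2, a3) \<Longrightarrow> jet_stabilizes (b1, b2, b3) (b1, b2, b3) (b1, b2, b3)
    \<Longrightarrow> \<not> jet_stabilizes (-1/6, -17/360, -367/15120) (b1, b2, b3) (a1, a2, a3)"
  unfolding jet_stabilizes.simps by algebra

lemma seiffert_T_jet_incompatible:
  "jet_stabilizes (a1, a2, a3) (a1, a2, a3) (a1, a2, a3) \<Longrightarrow> jet_stabilizes (b1, b2, b3) (b1, b2, b3) (b1, b2, b3)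
    \<Longrightarrow> \<not> jet_stabilizes (1/3, -4/45, 44/945) (b1, b2, b3) (a1, a2, a3)"
  unfolding jet_stabilizes.simps by algebra

lemma neuman_sandor_jet_incompatible:
  "jet_stabilizes (a1, a2, a3) (a1, a2, a3) (a1, a2, a3) \<Longrightarrow> jet_stabilizes (b1, b2, b3) (b1, b2, b3) (b1, b2, b3)
    \<Longrightarrow> \<not> jet_stabilizes (1/6, -17/360, 367/15120) (b1, b2, b3) (a1, a2, a3)"
  unfolding jet_stabilizes.simps by algebra

theorem mainTheorem16:
  shows "\<forall>N \<in> {seiffert_P, seiffert_T, neuman_sandor}.
           \<not> (\<exists>K M. good_mean K \<and> good_mean M \<and> stabilizable N K M)"
proof -
  have "seiffert_type seiffert_P arcsin" "seiffert_type seiffert_T arctan" "seiffert_type neuman_sandor arsinh"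
    by (simp_all add: seiffert_type_def seiffert_P_def seiffert_T_def neuman_sandor_def)
  moreover have "arcsin (-y) = - arcsin y" "arctan (-y) = - arctan y" "arsinh (-y) = - arsinh y"
    if "\<bar>y\<bar> < 1" for y :: real
    using that by (simp_all add: arcsin_minus arctan_minus)
  ultimately show ?thesis
    using seiffert_type_no_stabilizer[OF _ _ seiffert_P_asymp seiffert_P_jet_incompatible]
      seiffert_type_no_stabilizer[OF _ _ seiffert_T_asymp seiffert_T_jet_incompatible]
      seiffert_type_no_stabilizer[OF _ _ neuman_sandor_asymp neuman_sandor_jet_incompatible]
    by blast
qed

end
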